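(* Let $U:[0,T]\times\mathbb{R}^N\to\mathbb{R}\cup\{\pm\infty\}$ be proper and lower semicontinuous, and let $H:[0,T]\times\mathbb{R}^N\times\mathbb{R}^N\to\mathbb{R}$ satisfy (H1)–(H2); put $L(t,x,\cdot)=H^*(t,x,\cdot)$. Suppose that for every $(t,x)\in\mathrm{dom}\,U\cap(0,T]\times\mathbb{R}^N$ and every $(p_t,p_x)\in\partial U(t,x)$ one has $-p_t+H(t,x,-p_x)\leq0$. Then for every $(t,x)\in\mathrm{dom}\,U\cap(0,T]\times\mathbb{R}^N$, every $(n^t,n^x,n^u)\in N_{\mathrm{epi}\,U}(t,x,U(t,x))$ and every $v\in\mathrm{dom}\,L(t,x,\cdot)$, one has $n^t+\langle v,n^x\rangle-n^uL(t,x,v)\geq0$.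
   Context: (H1) $H$ is continuous in all variables. (H2) $H(t,x,p)$ is convex in $p$. $H^*(t,x,v)=\sup_p\{\langle v,p\rangle-H(t,x,p)\}$. $\mathrm{dom}\,\varphi=\{z:\varphi(z)\neq\pm\infty\}$, $\mathrm{epi}\,\varphi=\{(z,r):\varphi(z)\leq r\}$; proper means never $-\infty$ and not identically $+\infty$. $U$ is regarded as $+\infty$ outside $[0,T]\times\mathbb{R}^N$. Subderivative: $d\varphi(z)(v)=\liminf_{\tau\to0^+,y\to v}(\varphi(z+\tau y)-\varphi(z))/\tau$; subdifferential $\partial\varphi(z)=\{p:\langle v,p\rangle\leq d\varphi(z)(v)\ \forall v\}$. For $E\subset\mathbb{R}^M$, $w\in E$: $T_E(w)=\{\zeta:\liminf_{\tau\to0^+}\mathrm{dist}(w+\tau\zeta,E)/\tau=0\}$ and $N_E(w)=\{\xi:\langle\zeta,\xi\rangle\leq0\ \forall\zeta\in T_E(w)\}$. *)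

theory Defs
  imports "HOL-Analysis.Analysis"
begin

definition edom :: "('z \<Rightarrow> ereal) \<Rightarrow> 'z set" where
  "edom \<phi> = {z. \<phi> z \<noteq> \<infinity> \<and> \<phi> z \<noteq> -\<infinity>}"

definition epi :: "('z \<Rightarrow> ereal) \<Rightarrow> ('z \<times> real) set" where
  "epi \<phi> = {(z, r). \<phi> z \<le> ereal r}"

definition proper_fun :: "('z \<Rightarrow> ereal) \<Rightarrow> bool" where
  "proper_fun \<phi> \<longleftrightarrow> (\<forall>z. \<phi> z \<noteq> -\<infinity>) \<and> (\<exists>z. \<phi> z \<noteq> \<infinity>)"

definition lsc_on :: "'z::topological_space set \<Rightarrow> ('z \<Rightarrow> ereal) \<Rightarrow> bool" where
  "lsc_on S \<phi> \<longleftrightarrow> (\<forall>z\<in>S. \<phi> z \<le> Liminf (at z within S) \<phi>)"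

definition subderiv :: "('z::real_normed_vector \<Rightarrow> ereal) \<Rightarrow> 'z \<Rightarrow> 'z \<Rightarrow> ereal" where
  "subderiv \<phi> z v =
     Liminf (at_right (0::real) \<times>\<^sub>F nhds v)
       (\<lambda>(\<tau>, y). (\<phi> (z + \<tau> *\<^sub>R y) - \<phi> z) / ereal \<tau>)"

definition subdiff :: "('z::real_inner \<Rightarrow> ereal) \<Rightarrow> 'z \<Rightarrow> 'z set" where
  "subdiff \<phi> z = {p. \<forall>v. ereal (inner v p) \<le> subderiv \<phi> z v}"

definition tangent_cone :: "'w::real_normed_vector set \<Rightarrow> 'w \<Rightarrow> 'w set" where
  "tangent_cone E w =
     {\<zeta>. Liminf (at_right (0::real)) (\<lambda>\<tau>. ereal (infdist (w + \<tau> *\<^sub>R \<zeta>) E / \<tau>)) = 0}"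

definition normal_cone :: "'w::real_inner set \<Rightarrow> 'w \<Rightarrow> 'w set" where
  "normal_cone E w = {\<xi>. \<forall>\<zeta>\<in>tangent_cone E w. inner \<zeta> \<xi> \<le> 0}"

definition conj_H :: "(real \<Rightarrow> 'a::real_inner \<Rightarrow> 'a \<Rightarrow> real) \<Rightarrow> real \<Rightarrow> 'a \<Rightarrow> 'a \<Rightarrow> ereal" where
  "conj_H H t x v = (SUP p. ereal (inner v p - H t x p))"

end

(*
  Let ((n_t, n_x), n_u) be a normal to the epigraph of U at (z0, U z0), z0 = (t, x). Then n_u <= 0,
  and since the space is finite dimensional the normal is a regular (Frechet) normal.

  If n_u < 0, then (n_t, n_x) / |n_u| is a Frechet subgradient of U at z0, so the Hamilton-Jacobi
  inequality holds for it, and the Fenchel inequality <v, p> - H p <= L v gives the claim.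

  If n_u = 0, minimizing |z - (z0 + tau (n_t, n_x))|^2 + 2 kappa (r - U z0) + ((r - U z0)^+)^2
  over a compact piece of the epigraph produces points z_k -> z0 carrying subgradients p_k and
  scalars mu_k -> 0+ with mu_k p_k -> (n_t, n_x). Convexity of H between 0 and -p_k, the
  Hamilton-Jacobi inequality at z_k and continuity of H give H (-S n_x) - H 0 <= S n_t for all
  S > 0 in the limit; with the Fenchel inequality at -S n_x and S -> infinity this yields
  n_t + <v, n_x> >= 0.
*)
theory Submission
  imports Defs
begin

lemma open_superlevel_if_lsc_on:
  fixes U :: "'z::metric_space \<Rightarrow> ereal"
  assumes "closed S" and "\<And>z. z \<notin> S \<Longrightarrow> U z = \<infinity>" and "lsc_on S U"
  shows "open {z. ereal c < U z}"
  unfolding open_dist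
proof (intro ballI)
  fix z assume "z \<in> {z. ereal c < U z}"
  then have cz: "ereal c < U z" by simp
  show "\<exists>e>0. \<forall>z'. dist z' z < e \<longrightarrow> z' \<in> {z. ereal c < U z}"
  proof (cases "z \<in> S")
    case True
    with assms(3) cz have "ereal c < Liminf (at z within S) U"
      unfolding lsc_on_def by (meson less_le_trans)
    then have "\<forall>\<^sub>F z' in at z within S. ereal c < U z'" by (rule less_LiminfD)
    then obtain d where "d > 0" "\<forall>z'\<in>S. z' \<noteq> z \<and> dist z' z < d \<longrightarrow> ereal c < U z'"
      unfolding eventually_at by blast
    with cz assms(2) show ?thesis by (metis (mono_tags) less_ereal.simps(4) mem_Collect_eq)
  next
    case False
    with assms(1) obtain d where "d > 0" "ball z d \<subseteq> - S"
      by (meson ComplI open_Compl open_contains_ball)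
    with assms(2) show ?thesis by (auto simp: dist_commute subset_iff)
  qed
qed

lemma closed_epi_if_open_superlevel:
  fixes U :: "'z::topological_space \<Rightarrow> ereal"
  assumes "\<And>c. open {z. ereal c < U z}"
  shows "closed (epi U)"
proof -
  have eq: "- epi U = (\<Union>c. {z. ereal c < U z} \<times> {..<c})"
  proof (intro set_eqI iffI)
    fix w assume "w \<in> - epi U"
    then obtain z r where w: "w = (z, r)" and "ereal r < U z"
      by (cases w) (auto simp: epi_def not_le)
    then obtain c where "ereal r < ereal c" "ereal c < U z"
      by (meson ereal_dense2 less_ereal.simps(1))
    with w show "w \<in> (\<Union>c. {z. ereal c < U z} \<times> {..<c})" by auto
  next
    fix w assume "w \<in> (\<Union>c. {z. ereal c < U z} \<times> {..<c})"
    then obtain c z r where w: "w = (z, r)" and rc: "ereal r < ereal c" and cU: "ereal c < U z"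
      by auto
    from rc cU have "ereal r < U z" by (rule less_trans)
    then show "w \<in> - epi U" by (simp add: w epi_def)
  qed
  have "open (- epi U)"
    unfolding eq by (intro open_UN ballI open_Times assms open_lessThan)
  then show ?thesis by (simp add: closed_def)
qed

lemma eventually_nhds_0_translate:
  fixes z :: "'a::real_normed_vector"
  assumes "\<forall>\<^sub>F x in nhds z. P x"
  shows "\<forall>\<^sub>F h in nhds 0. P (z + h)"
proof -
  have "((\<lambda>h. z + h) \<longlongrightarrow> z + 0) (nhds 0)"
    by (intro tendsto_add tendsto_const filterlim_ident)
  with assms show ?thesis
    by (simp add: filterlim_iff)
qed

lemma difference_quotient_lower_bound:
  fixes U :: "'z::real_inner \<Rightarrow> ereal"
  assumes Uz: "U z = ereal u" and "\<tau> > 0"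
    and "ereal (u + \<tau> * inner p y - e * (\<tau> * norm y)) \<le> U (z + \<tau> *\<^sub>R y)"
  shows "ereal (inner p y - e * norm y) \<le> (U (z + \<tau> *\<^sub>R y) - U z) / ereal \<tau>"
proof (cases "U (z + \<tau> *\<^sub>R y)")
  case (real w)
  with assms have "\<tau> * (inner p y - e * norm y) \<le> w - u" by (simp add: algebra_simps)
  with real Uz \<open>\<tau> > 0\<close> show ?thesis by (simp add: field_simps)
qed (use assms in auto)

lemma subderiv_ge_if_frechet_bound:
  fixes U :: "'z::real_inner \<Rightarrow> ereal"
  assumes Uz: "U z = ereal u"
    and frechet: "\<forall>\<^sub>F h in nhds 0. ereal (u + inner p h - e * norm h) \<le> U (z + h)"
  shows "ereal (inner p v - e * norm v) \<le> subderiv U z v"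
proof -
  let ?F = "at_right (0::real) \<times>\<^sub>F nhds v"
  have "(fst \<longlongrightarrow> 0) ?F"
    using filterlim_fst[of "at_right 0" "nhds v"]
    by (rule filterlim_mono) (simp_all add: at_within_le_nhds)
  moreover have snd: "(snd \<longlongrightarrow> v) ?F"
    by (rule filterlim_snd)
  ultimately have "((\<lambda>(\<tau>, y). \<tau> *\<^sub>R y) \<longlongrightarrow> 0) ?F"
    unfolding case_prod_unfold using tendsto_scaleR by fastforce
  then have "\<forall>\<^sub>F (\<tau>, y) in ?F. ereal (u + inner p (\<tau> *\<^sub>R y) - e * norm (\<tau> *\<^sub>R y)) \<le> U (z + \<tau> *\<^sub>R y)"
    using frechet unfolding filterlim_iff case_prod_unfold by blast
  moreover have "\<forall>\<^sub>F (\<tau>, y) in ?F. \<tau> > 0"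
    using filterlim_fst[of "at_right 0" "nhds v"] eventually_at_right_less[of 0]
    unfolding filterlim_iff case_prod_unfold by blast
  ultimately have "\<forall>\<^sub>F (\<tau>, y) in ?F. ereal (inner p y - e * norm y) \<le> (U (z + \<tau> *\<^sub>R y) - U z) / ereal \<tau>"
    by eventually_elim (auto intro: difference_quotient_lower_bound[of U z u, OF Uz])
  then have "Liminf ?F (\<lambda>(\<tau>, y). ereal (inner p y - e * norm y)) \<le> subderiv U z v"
    unfolding subderiv_def by - (rule Liminf_mono, simp add: case_prod_unfold)
  moreover have "((\<lambda>(\<tau>, y). ereal (inner p y - e * norm y)) \<longlongrightarrow> ereal (inner p v - e * norm v)) ?F"
    unfolding case_prod_unfold by (intro tendsto_intros snd)
  moreover have "?F \<noteq> bot"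
    by (simp add: prod_filter_eq_bot)
  ultimately show ?thesis
    using lim_imp_Liminf by metis
qed

lemma subdiff_if_frechet:
  fixes U :: "'z::real_inner \<Rightarrow> ereal"
  assumes Uz: "U z = ereal u"
    and frechet: "\<And>e. e > 0 \<Longrightarrow> \<forall>\<^sub>F h in nhds 0. ereal (u + inner p h - e * norm h) \<le> U (z + h)"
  shows "p \<in> subdiff U z"
  unfolding subdiff_def
proof (intro CollectI allI, rule ereal_le_epsilon2)
  fix v :: 'z and e :: real assume "e > 0"
  have nv: "norm v + 1 > 0"
    using norm_ge_zero[of v] by linarith
  with \<open>e > 0\<close> have "ereal (inner p v - e / (norm v + 1) * norm v) \<le> subderiv U z v"
    by (intro subderiv_ge_if_frechet_bound[of U z u, OF Uz] frechet divide_pos_pos)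
  moreover have "e / (norm v + 1) * norm v \<le> e"
    using \<open>e > 0\<close> nv by (simp add: field_simps)
  ultimately show "ereal (inner v p) \<le> subderiv U z v + ereal e"
    by (cases "subderiv U z v") (auto simp: inner_commute)
qed

definition regular_normal_cone :: "'w::real_inner set \<Rightarrow> 'w \<Rightarrow> 'w set" where
  "regular_normal_cone E w =
     {\<xi>. \<forall>e>0. \<forall>\<^sub>F w' in nhds w. w' \<in> E \<longrightarrow> inner \<xi> (w' - w) \<le> e * norm (w' - w)}"

lemma infdist_ray_le:
  fixes E :: "'w::real_normed_vector set"
  assumes "w' \<in> E" "w' \<noteq> w"
  shows "infdist (w + norm (w' - w) *\<^sub>R l) E / norm (w' - w) \<le> dist ((1 / norm (w' - w)) *\<^sub>R (w' - w)) l"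
proof -
  define \<tau> where "\<tau> = norm (w' - w)"
  have "0 < \<tau>"
    using assms(2) by (simp add: \<tau>_def)
  have "infdist (w + \<tau> *\<^sub>R l) E \<le> dist (w + \<tau> *\<^sub>R l) w'"
    using assms(1) by (rule infdist_le)
  also have "w + \<tau> *\<^sub>R l - w' = \<tau> *\<^sub>R (l - (1 / \<tau>) *\<^sub>R (w' - w))"
    using \<open>0 < \<tau>\<close> by (simp add: algebra_simps)
  then have "dist (w + \<tau> *\<^sub>R l) w' = \<tau> * dist ((1 / \<tau>) *\<^sub>R (w' - w)) l"
    using \<open>0 < \<tau>\<close> by (simp add: dist_norm norm_minus_commute)
  finally show ?thesis
    using \<open>0 < \<tau>\<close> by (simp add: \<tau>_def divide_le_eq mult.commute)
qed

lemma tangent_cone_if_limit_direction: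
  fixes E :: "'w::real_normed_vector set"
  assumes W: "\<And>n. W n \<in> E" "\<And>n. W n \<noteq> w" and "W \<longlonglongrightarrow> w"
    and dir: "(\<lambda>n. (1 / norm (W n - w)) *\<^sub>R (W n - w)) \<longlonglongrightarrow> l"
  shows "l \<in> tangent_cone E w"
proof -
  define f where "f \<tau> = ereal (infdist (w + \<tau> *\<^sub>R l) E / \<tau>)" for \<tau>
  define \<tau> where "\<tau> n = norm (W n - w)" for n
  have "\<tau> \<longlonglongrightarrow> 0"
    unfolding \<tau>_def using \<open>W \<longlonglongrightarrow> w\<close> by (simp add: LIM_zero_iff tendsto_norm_zero)
  moreover have "\<forall>n. 0 < \<tau> n \<and> \<tau> n \<noteq> 0"
    using W(2) by (simp add: \<tau>_def)
  ultimately have \<tau>_lim: "filterlim \<tau> (at_right 0) sequentially"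
    by (simp add: filterlim_at always_eventually)
  have "Liminf (at_right 0) f \<le> 0"
  proof (rule ccontr)
    assume "\<not> Liminf (at_right 0) f \<le> 0"
    then obtain \<epsilon> where "0 < ereal \<epsilon>" "ereal \<epsilon> < Liminf (at_right 0) f"
      by (meson ereal_dense2 less_ereal.simps not_le)
    then have "\<forall>\<^sub>F s in at_right 0. ereal \<epsilon> < f s"
      by (intro less_LiminfD)
    then have "\<forall>\<^sub>F n in sequentially. ereal \<epsilon> < f (\<tau> n)"
      using \<tau>_lim unfolding filterlim_iff by blast
    moreover have "\<forall>\<^sub>F n in sequentially. dist ((1 / \<tau> n) *\<^sub>R (W n - w)) l < \<epsilon>"
      using dir \<open>0 < ereal \<epsilon>\<close> unfolding \<tau>_def by (intro tendstoD) auto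
    ultimately have "\<forall>\<^sub>F n in sequentially. False"
    proof eventually_elim
      case (elim n)
      have "ereal \<epsilon> < ereal (dist ((1 / \<tau> n) *\<^sub>R (W n - w)) l)"
        using elim(1) infdist_ray_le[OF W(1,2), of n l] by (simp add: f_def \<tau>_def)
      with elim(2) show False by simp
    qed
    then show False by simp
  qed
  moreover have "Liminf (at_right 0) f \<ge> 0"
    unfolding f_def
    by (intro Liminf_bounded) (auto simp: eventually_at_right_field infdist_nonneg intro!: exI[of _ 1])
  ultimately show ?thesis
    unfolding tangent_cone_def f_def by simp
qed

lemma normal_cone_subset_regular_normal_cone:
  fixes E :: "'w::euclidean_space set"
  shows "normal_cone E w \<subseteq> regular_normal_cone E w"
proof
  fix \<xi> assume \<xi>: "\<xi> \<in> normal_cone E w"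
  \<comment> \<open>A sequence violating the regular normal inequality has unit directions
    accumulating at a tangent direction on which \<open>\<xi>\<close> is positive.\<close>
  have "\<forall>\<^sub>F w' in nhds w. w' \<in> E \<longrightarrow> inner \<xi> (w' - w) \<le> e * norm (w' - w)" if "e > 0" for e
  proof (rule ccontr)
    assume "\<not> ?thesis"
    then have "\<forall>n. \<exists>w'. dist w' w < 1 / Suc n \<and> w' \<in> E \<and> inner \<xi> (w' - w) > e * norm (w' - w)"
      unfolding eventually_nhds_metric by (metis not_le of_nat_0_less_iff zero_less_Suc zero_less_divide_1_iff)
    then obtain W where W: "\<And>n. dist (W n) w < 1 / Suc n" "\<And>n. W n \<in> E"
      and W_above: "\<And>n. inner \<xi> (W n - w) > e * norm (W n - w)"
      by metis
    have W_ne: "W n \<noteq> w" for n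
      using W_above[of n] by auto
    have "W \<longlonglongrightarrow> w"
      using W(1) LIMSEQ_norm_0[of "\<lambda>n. W n - w"] by (simp add: dist_norm LIM_zero_iff)
    define D where "D n = (1 / norm (W n - w)) *\<^sub>R (W n - w)" for n
    have "D n \<in> sphere 0 1" for n
      using W_ne[of n] by (simp add: D_def)
    then obtain l r where "strict_mono r" and lim: "(D \<circ> r) \<longlonglongrightarrow> l"
      using compact_imp_seq_compact[OF compact_sphere] by (metis seq_compactE)
    have "l \<in> tangent_cone E w"
      using W(2) W_ne LIMSEQ_subseq_LIMSEQ[OF \<open>W \<longlonglongrightarrow> w\<close> \<open>strict_mono r\<close>] lim
      by (intro tangent_cone_if_limit_direction[of "W \<circ> r"]) (simp_all add: D_def o_def)
    with \<xi> have "inner l \<xi> \<le> 0"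
      unfolding normal_cone_def by blast
    moreover have "e < inner (D n) \<xi>" for n
    proof -
      have "inner (D n) \<xi> = inner \<xi> (W n - w) / norm (W n - w)"
        unfolding D_def inner_scaleR_left by (simp add: inner_commute)
      then show ?thesis
        using W_above[of n] W_ne[of n] by (simp add: pos_less_divide_eq)
    qed
    then have "e \<le> inner l \<xi>"
      using lim by (intro LIMSEQ_le_const[of "\<lambda>n. inner (D (r n)) \<xi>"]) (auto intro: less_imp_le tendsto_intros simp: o_def)
    ultimately show False
      using \<open>e > 0\<close> by linarith
  qed
  then show "\<xi> \<in> regular_normal_cone E w"
    unfolding regular_normal_cone_def by blast
qed

lemma regular_normal_epi_bound:
  fixes U :: "'z::real_inner \<Rightarrow> ereal"
  assumes "(y, c) \<in> regular_normal_cone (epi U) (z, u)" and "0 < \<epsilon>"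
  obtains \<delta> where "0 < \<delta>"
    and "\<And>h w. U (z + h) \<le> ereal w \<Longrightarrow> norm (h, w - u) < \<delta> \<Longrightarrow>
           inner y h + c * (w - u) \<le> \<epsilon> * norm (h, w - u)"
proof -
  obtain \<delta> where "0 < \<delta>" and \<delta>: "\<And>w'. dist w' (z, u) < \<delta> \<Longrightarrow> w' \<in> epi U \<Longrightarrow>
      inner (y, c) (w' - (z, u)) \<le> \<epsilon> * norm (w' - (z, u))"
    using assms unfolding regular_normal_cone_def eventually_nhds_metric by blast
  have "inner y h + c * (w - u) \<le> \<epsilon> * norm (h, w - u)"
    if "U (z + h) \<le> ereal w" "norm (h, w - u) < \<delta>" for h w
    using \<delta>[of "(z + h, w)"] that by (simp add: dist_norm epi_def inner_Pair)
  with \<open>0 < \<delta>\<close> show ?thesis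
    using that by blast
qed

lemma normal_cone_epi_snd_nonpos:
  fixes U :: "'z::real_inner \<Rightarrow> ereal"
  assumes "(\<xi>, \<nu>) \<in> normal_cone (epi U) (z, r)" and "U z \<le> ereal r"
  shows "\<nu> \<le> 0"
proof -
  have "infdist ((z, r) + \<tau> *\<^sub>R (0, 1)) (epi U) = 0" if "\<tau> > 0" for \<tau> :: real
  proof -
    have "(z, r + \<tau>) \<in> epi U"
      using assms(2) that unfolding epi_def by (auto intro: order.trans)
    then show ?thesis by (simp add: infdist_zero)
  qed
  then have "\<forall>\<^sub>F \<tau> in at_right 0. ereal (infdist ((z, r) + \<tau> *\<^sub>R (0, 1)) (epi U) / \<tau>) = 0"
    by (auto simp: eventually_at_right_field intro!: exI[of _ 1])
  then have "Liminf (at_right 0) (\<lambda>\<tau>. ereal (infdist ((z, r) + \<tau> *\<^sub>R (0, 1)) (epi U) / \<tau>))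
      = Liminf (at_right (0::real)) (\<lambda>_. 0)"
    by (rule Liminf_eq)
  then have "((0::'z), (1::real)) \<in> tangent_cone (epi U) (z, r)"
    unfolding tangent_cone_def by (simp add: Liminf_const)
  with assms(1) show ?thesis
    unfolding normal_cone_def by (auto simp: inner_Pair)
qed

lemma linear_slope_bound:
  fixes m \<epsilon> e P n q s :: real
  assumes "0 < m" "0 \<le> \<epsilon>" "2 * \<epsilon> \<le> m" "\<epsilon> * (2 * P + 2) \<le> e * m"
    and "0 \<le> n" "\<bar>q\<bar> \<le> P * n" "s < q" "m * (q - s) \<le> \<epsilon> * (n + \<bar>s\<bar>)"
  shows "q - e * n \<le> s"
proof -
  have "\<bar>s\<bar> \<le> P * n + (q - s)"
    using assms(6,7) by linarith
  then have "m * (q - s) \<le> \<epsilon> * (n + P * n + (q - s))"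
    using assms(2,8) by (smt (verit) mult_left_mono)
  then have "(m - \<epsilon>) * (q - s) \<le> \<epsilon> * (1 + P) * n"
    by (simp add: algebra_simps)
  moreover have "(m / 2) * (q - s) \<le> (m - \<epsilon>) * (q - s)"
    using assms(3,7) by (intro mult_right_mono) auto
  moreover have "\<epsilon> * (1 + P) \<le> (m / 2) * e"
    using assms(4) by (simp add: algebra_simps)
  then have "\<epsilon> * (1 + P) * n \<le> (m / 2) * e * n"
    using assms(5) by (rule mult_right_mono)
  ultimately have "(m / 2) * (q - s) \<le> (m / 2) * (e * n)"
    by (simp only: mult.assoc)
  with \<open>0 < m\<close> show ?thesis
    by simp
qed

lemma frechet_bound_from_regular_normal:
  fixes U :: "'z::real_inner \<Rightarrow> ereal"
  assumes \<delta>: "\<And>h w. U (z + h) \<le> ereal w \<Longrightarrow> norm (h, w - u) < \<delta> \<Longrightarrow>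
               m * inner p h - m * (w - u) \<le> \<epsilon> * norm (h, w - u)"
    and lsc: "ereal (u - \<delta> / 2) < U (z + h)" and h: "2 * (norm p + 1) * norm h < \<delta>"
    and "0 < m" "0 < \<epsilon>" "2 * \<epsilon> \<le> m" "\<epsilon> * (2 * norm p + 2) \<le> e * m" "0 \<le> e"
  shows "ereal (u + inner p h - e * norm h) \<le> U (z + h)"
proof (cases "U (z + h)")
  case (real w)
  have q: "\<bar>inner p h\<bar> \<le> norm p * norm h"
    by (rule Cauchy_Schwarz_ineq2)
  have "0 \<le> e * norm h"
    using \<open>0 \<le> e\<close> by simp
  have "2 * (norm p * norm h) + 2 * norm h < \<delta>"
    using h by (simp add: algebra_simps)
  then have Ph: "norm p * norm h \<le> \<delta> / 2" and "norm h \<le> \<delta> / 2"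
    using mult_nonneg_nonneg[OF norm_ge_zero norm_ge_zero, of p h] norm_ge_zero[of h] by linarith+
  have "inner p h - e * norm h \<le> w - u"
  proof (cases "w - u < inner p h")
    case True
    have "u - \<delta> / 2 < w"
      using lsc real by simp
    with True q Ph have "\<bar>w - u\<bar> < \<delta> / 2"
      by linarith
    with \<open>norm h \<le> \<delta> / 2\<close> have pair: "norm (h, w - u) \<le> norm h + \<bar>w - u\<bar>" "norm h + \<bar>w - u\<bar> < \<delta>"
      using norm_Pair_le[of h "w - u"] by simp_all
    then have "m * inner p h - m * (w - u) \<le> \<epsilon> * norm (h, w - u)"
      using real by (intro \<delta>) auto
    also have "\<dots> \<le> \<epsilon> * (norm h + \<bar>w - u\<bar>)"
      using pair(1) \<open>0 < \<epsilon>\<close> by (intro mult_left_mono) auto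
    finally have "m * (inner p h - (w - u)) \<le> \<epsilon> * (norm h + \<bar>w - u\<bar>)"
      by (simp add: right_diff_distrib)
    with assms(4-8) True q show ?thesis
      by (intro linear_slope_bound[of m \<epsilon> "norm p" e]) auto
  qed (use \<open>0 \<le> e * norm h\<close> in linarith)
  with real show ?thesis
    by simp
qed (use lsc in auto)

lemma subdiff_if_regular_normal_epi:
  fixes U :: "'z::real_inner \<Rightarrow> ereal"
  assumes lsc: "\<And>c. open {z. ereal c < U z}" and Uz: "U z = ereal u"
    and normal: "(m *\<^sub>R p, - m) \<in> regular_normal_cone (epi U) (z, u)" and "0 < m"
  shows "p \<in> subdiff U z"
proof (rule subdiff_if_frechet[of U z u, OF Uz])
  fix e :: real assume "e > 0"
  define \<epsilon> where "\<epsilon> = min (m / 2) (e * m / (2 * norm p + 2))"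
  have P: "0 < 2 * norm p + 2"
    by (simp add: add_nonneg_pos)
  have "\<epsilon> \<le> e * m / (2 * norm p + 2)"
    by (simp add: \<epsilon>_def)
  with P have "\<epsilon> * (2 * norm p + 2) \<le> e * m"
    by (simp add: pos_le_divide_eq)
  moreover have "0 < \<epsilon>" "2 * \<epsilon> \<le> m"
    using \<open>0 < m\<close> \<open>e > 0\<close> P by (simp_all add: \<epsilon>_def)
  ultimately have \<epsilon>: "\<epsilon> * (2 * norm p + 2) \<le> e * m" "0 < \<epsilon>" "2 * \<epsilon> \<le> m"
    by auto
  obtain \<delta> where "0 < \<delta>" and \<delta>: "\<And>h w. U (z + h) \<le> ereal w \<Longrightarrow> norm (h, w - u) < \<delta> \<Longrightarrow>
      m * inner p h - m * (w - u) \<le> \<epsilon> * norm (h, w - u)"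
    using regular_normal_epi_bound[OF normal \<open>0 < \<epsilon>\<close>] by auto
  have "z \<in> {z. ereal (u - \<delta> / 2) < U z}"
    using Uz \<open>0 < \<delta>\<close> by simp
  from eventually_nhds_in_open[OF lsc this]
  have "\<forall>\<^sub>F h in nhds 0. z + h \<in> {z. ereal (u - \<delta> / 2) < U z}"
    by (rule eventually_nhds_0_translate)
  moreover have "\<forall>\<^sub>F h in nhds 0. h \<in> ball 0 (\<delta> / (2 * (norm p + 1)))"
    using \<open>0 < \<delta>\<close> by (intro eventually_nhds_ball) (simp add: add_nonneg_pos)
  ultimately show "\<forall>\<^sub>F h in nhds 0. ereal (u + inner p h - e * norm h) \<le> U (z + h)"
  proof eventually_elim
    case (elim h)
    have "0 < 2 * (norm p + 1)"
      by (simp add: add_nonneg_pos)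
    with elim(2) have "2 * (norm p + 1) * norm h < \<delta>"
      by (simp add: pos_less_divide_eq mult.commute)
    with elim(1) \<epsilon> \<open>0 < m\<close> \<open>e > 0\<close> show ?case
      by (intro frechet_bound_from_regular_normal[OF \<delta>]) auto
  qed
qed

lemma le_add_if_square_le:
  fixes x b c :: real
  assumes "0 \<le> b" "0 \<le> c" "x\<^sup>2 \<le> b * x + c\<^sup>2"
  shows "x \<le> b + c"
proof (rule ccontr)
  assume "\<not> x \<le> b + c"
  then have "(b + c) * x < x * x" and "c * c \<le> c * x"
    using assms(1,2) by (auto intro: mult_strict_right_mono mult_left_mono)
  with assms(3) show False
    by (simp add: power2_eq_square algebra_simps)
qed

lemma quadratic_slope_bound:
  fixes a s q n P e :: real
  assumes "0 < a" "0 \<le> n" "n \<le> a" "0 \<le> P" "\<bar>q\<bar> \<le> P * n" "0 \<le> e" "- a < s"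
    and quad: "2 * a * q - n\<^sup>2 \<le> 2 * a * s + s\<^sup>2"
    and small: "n * (1 + (2 * P + 1)\<^sup>2) \<le> 2 * a * e"
  shows "q - e * n \<le> s"
proof (cases "q \<le> s")
  case True
  with assms(2,6) show ?thesis
    by (smt (verit) mult_nonneg_nonneg)
next
  case False
  define K where "K = 2 * P + 1"
  have "\<bar>s\<bar> \<le> K * n"
  proof (cases "0 \<le> s")
    case True
    with False assms(2,4,5) show ?thesis
      by (simp add: K_def algebra_simps)
  next
    case neg: False
    have "s\<^sup>2 \<le> a * (- s)"
      using mult_right_mono[of "- s" a "- s"] neg \<open>- a < s\<close> by (simp add: power2_eq_square)
    moreover have "n\<^sup>2 \<le> a * n"
      using assms(2,3) by (simp add: power2_eq_square mult_right_mono)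
    moreover have "- (a * q) \<le> a * (P * n)"
      using mult_left_mono[of "- q" "P * n" a] assms(1,5) by (simp add: abs_le_iff)
    ultimately have "a * (- s) \<le> a * (K * n)"
      using quad by (simp add: K_def algebra_simps)
    then have "- s \<le> K * n"
      using \<open>0 < a\<close> by (rule mult_left_le_imp_le)
    with neg show ?thesis
      by simp
  qed
  then have "s\<^sup>2 \<le> K\<^sup>2 * n\<^sup>2"
    by (metis abs_ge_zero power2_abs power_mono power_mult_distrib)
  with quad have "2 * a * (q - s) \<le> (1 + K\<^sup>2) * n * n"
    by (simp add: power2_eq_square algebra_simps)
  also have "\<dots> \<le> 2 * a * e * n"
    using mult_right_mono[OF small assms(2)] by (simp add: K_def mult.commute mult.left_commute)
  finally show ?thesis
    using \<open>0 < a\<close> by (simp add: mult.assoc)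
qed

lemma frechet_bound_from_quadratic_minorant:
  fixes U :: "'z::real_inner \<Rightarrow> ereal"
  assumes quad: "\<And>w. U (z + h) = ereal w \<Longrightarrow> w < r + c \<Longrightarrow>
                  2 * a * inner p h - (norm h)\<^sup>2 \<le> 2 * a * (w - r) + (w - r)\<^sup>2"
    and lsc: "ereal (r - a) < U (z + h)"
    and "0 < a" "0 \<le> e" "norm h \<le> a" "norm h * (norm p + 1) \<le> c"
    and "norm h * (1 + (2 * norm p + 1)\<^sup>2) \<le> 2 * a * e"
  shows "ereal (r + inner p h - e * norm h) \<le> U (z + h)"
proof (cases "U (z + h)")
  case (real w)
  have q: "\<bar>inner p h\<bar> \<le> norm p * norm h"
    by (rule Cauchy_Schwarz_ineq2)
  have "inner p h - e * norm h \<le> w - r"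
  proof (cases "w < r + c")
    case True
    with assms real q show ?thesis
      by (intro quadratic_slope_bound[of a "norm h" "norm p"]) auto
  next
    case False
    have "norm p * norm h \<le> norm h * (norm p + 1)" "0 \<le> e * norm h"
      using \<open>0 \<le> e\<close> by (simp_all add: algebra_simps)
    with False q assms(6) show ?thesis
      by linarith
  qed
  with real show ?thesis
    by simp
qed (use lsc in auto)

lemma subdiff_if_quadratic_minorant:
  fixes U :: "'z::real_inner \<Rightarrow> ereal"
  assumes lsc: "\<And>c. open {z. ereal c < U z}" and Uz: "U z = ereal r" and "0 < a" "0 < c"
    and quad: "\<forall>\<^sub>F h in nhds 0. \<forall>w. U (z + h) = ereal w \<longrightarrow> w < r + c \<longrightarrow>
                  2 * a * inner p h - (norm h)\<^sup>2 \<le> 2 * a * (w - r) + (w - r)\<^sup>2"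
  shows "p \<in> subdiff U z"
proof (rule subdiff_if_frechet[of U z r, OF Uz])
  fix e :: real assume "e > 0"
  define K where "K = 1 + (2 * norm p + 1)\<^sup>2"
  have "0 < norm p + 1" "0 < K"
    by (simp_all add: K_def add_nonneg_pos add_pos_nonneg)
  have "z \<in> {z. ereal (r - a) < U z}"
    using Uz \<open>0 < a\<close> by simp
  from eventually_nhds_in_open[OF lsc this]
  have "\<forall>\<^sub>F h in nhds 0. z + h \<in> {z. ereal (r - a) < U z}"
    by (rule eventually_nhds_0_translate)
  moreover have "\<forall>\<^sub>F h in nhds 0. h \<in> ball 0 (min a (min (c / (norm p + 1)) (2 * a * e / K)))"
    using \<open>0 < a\<close> \<open>0 < c\<close> \<open>e > 0\<close> \<open>0 < norm p + 1\<close> \<open>0 < K\<close> by (intro eventually_nhds_ball) simp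
  ultimately show "\<forall>\<^sub>F h in nhds 0. ereal (r + inner p h - e * norm h) \<le> U (z + h)"
    using quad
  proof eventually_elim
    case (elim h)
    then have "norm h \<le> a" "norm h * (norm p + 1) \<le> c" "norm h * K \<le> 2 * a * e"
      using \<open>0 < norm p + 1\<close> \<open>0 < K\<close> by (auto simp: pos_less_divide_eq)
    with elim \<open>0 < a\<close> \<open>e > 0\<close> show ?case
      by (intro frechet_bound_from_quadratic_minorant[of U z h r c a p e]) (auto simp: K_def)
  qed
qed

(* The linear term forces minimizers onto the graph of U, and the first-order condition at a
   minimizer (z, r) makes (b - z) / (kappa + max (r - u) 0) a subgradient of U at z. *)
definition penalty :: "'a::real_inner \<Rightarrow> real \<Rightarrow> real \<Rightarrow> 'a \<Rightarrow> real \<Rightarrow> real" where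
  "penalty b u \<kappa> z r = (norm (z - b))\<^sup>2 + 2 * \<kappa> * (r - u) + (max (r - u) 0)\<^sup>2"

lemma max0_square_increment_le:
  fixes x s :: real
  shows "(max (x + s) 0)\<^sup>2 \<le> (max x 0)\<^sup>2 + 2 * max x 0 * s + s\<^sup>2"
proof (cases "0 \<le> x")
  case True
  then show ?thesis
    using zero_le_power2[of "x + s"] by (auto simp: max_def power2_sum)
next
  case False
  have "(x + s)\<^sup>2 \<le> s\<^sup>2" if "0 \<le> x + s"
    using False that by (intro power_mono) auto
  with False show ?thesis
    by (auto simp: max_def)
qed

lemma penalty_increment_le:
  "penalty b u \<kappa> (z + h) (r + s)
     \<le> penalty b u \<kappa> z r + 2 * inner (z - b) h + (norm h)\<^sup>2 + 2 * (\<kappa> + max (r - u) 0) * s + s\<^sup>2"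
proof -
  have "(norm (z + h - b))\<^sup>2 = (norm (z - b))\<^sup>2 + 2 * inner (z - b) h + (norm h)\<^sup>2"
    using dot_norm[of "z - b" h] by (simp add: algebra_simps)
  moreover have "(max (r + s - u) 0)\<^sup>2 \<le> (max (r - u) 0)\<^sup>2 + 2 * max (r - u) 0 * s + s\<^sup>2"
    using max0_square_increment_le[of "r - u" s] by (simp add: algebra_simps)
  ultimately show ?thesis
    by (simp add: penalty_def algebra_simps)
qed

lemma penalty_strict_mono:
  assumes "0 < \<kappa>" "r' < r"
  shows "penalty b u \<kappa> z r' < penalty b u \<kappa> z r"
proof -
  have "(max (r' - u) 0)\<^sup>2 \<le> (max (r - u) 0)\<^sup>2"
    using assms(2) by (intro power_mono) auto
  moreover have "2 * \<kappa> * (r' - u) < 2 * \<kappa> * (r - u)"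
    using assms by simp
  ultimately show ?thesis
    unfolding penalty_def by linarith
qed

lemma subdiff_at_penalty_minimizer:
  fixes U :: "'z::real_inner \<Rightarrow> ereal"
  assumes lsc: "\<And>c. open {z. ereal c < U z}" and Uz: "U z = ereal r" and "0 < \<kappa>" "0 < \<rho>"
    and near: "norm (z - x) \<le> \<rho> / 2" "r \<le> u + \<rho> / 2"
    and min: "\<And>z' r'. z' \<in> cball x \<rho> \<Longrightarrow> U z' \<le> ereal r' \<Longrightarrow> r' \<le> u + \<rho> \<Longrightarrow>
                penalty b u \<kappa> z r \<le> penalty b u \<kappa> z' r'"
  shows "(1 / (\<kappa> + max (r - u) 0)) *\<^sub>R (b - z) \<in> subdiff U z"
proof (rule subdiff_if_quadratic_minorant[OF lsc Uz])
  define a where "a = \<kappa> + max (r - u) 0"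
  show "0 < a" "0 < \<rho> / 2"
    using \<open>0 < \<kappa>\<close> \<open>0 < \<rho>\<close> by (simp_all add: a_def add_pos_nonneg)
  then have ap: "inner (z - b) h = - a * inner ((1 / a) *\<^sub>R (b - z)) h" for h
    by (simp add: inner_diff_left)
  have "\<forall>\<^sub>F h in nhds 0. h \<in> ball 0 (\<rho> / 2)"
    using \<open>0 < \<rho>\<close> by (intro eventually_nhds_ball) simp
  then show "\<forall>\<^sub>F h in nhds 0. \<forall>w. U (z + h) = ereal w \<longrightarrow> w < r + \<rho> / 2 \<longrightarrow>
      2 * a * inner ((1 / a) *\<^sub>R (b - z)) h - (norm h)\<^sup>2 \<le> 2 * a * (w - r) + (w - r)\<^sup>2"
  proof (rule eventually_mono, intro allI impI)
    fix h w assume h: "h \<in> ball 0 (\<rho> / 2)" and w: "U (z + h) = ereal w" "w < r + \<rho> / 2"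
    have "dist x (z + h) \<le> norm (z - x) + norm h"
      using norm_triangle_ineq[of "z - x" h] by (simp add: dist_norm norm_minus_commute algebra_simps)
    with near h w have "penalty b u \<kappa> z r \<le> penalty b u \<kappa> (z + h) (r + (w - r))"
      by (intro min) auto
    with penalty_increment_le[of b u \<kappa> z h r "w - r"] show
      "2 * a * inner ((1 / a) *\<^sub>R (b - z)) h - (norm h)\<^sup>2 \<le> 2 * a * (w - r) + (w - r)\<^sup>2"
      unfolding ap a_def by linarith
  qed
qed

lemma penalty_minimizer_exists:
  fixes U :: "'z::euclidean_space \<Rightarrow> ereal"
  assumes lsc: "\<And>c. open {z. ereal c < U z}" and Ux: "U x = ereal u"
    and low: "\<And>z. z \<in> cball x \<rho> \<Longrightarrow> ereal l < U z" and "0 \<le> \<rho>" and "0 < \<kappa>"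
  obtains zt rt where "U zt = ereal rt" "zt \<in> cball x \<rho>" "l < rt" "rt \<le> u + \<rho>"
    and "\<And>z r. z \<in> cball x \<rho> \<Longrightarrow> U z \<le> ereal r \<Longrightarrow> r \<le> u + \<rho> \<Longrightarrow>
           penalty b u \<kappa> zt rt \<le> penalty b u \<kappa> z r"
proof -
  define C where "C = epi U \<inter> (cball x \<rho> \<times> {l..u + \<rho>})"
  have "compact C"
    unfolding C_def
    by (intro closed_Int_compact closed_epi_if_open_superlevel lsc compact_Times compact_cball compact_Icc)
  moreover have "(x, u) \<in> C"
    using Ux low[of x] \<open>0 \<le> \<rho>\<close> by (auto simp: C_def epi_def)
  moreover have "continuous_on C (\<lambda>(z, r). penalty b u \<kappa> z r)"
    unfolding penalty_def case_prod_unfold by (intro continuous_intros)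
  ultimately obtain zt rt where "(zt, rt) \<in> C" and "\<forall>w\<in>C. penalty b u \<kappa> zt rt \<le> (\<lambda>(z, r). penalty b u \<kappa> z r) w"
    using continuous_attains_inf[of C "\<lambda>(z, r). penalty b u \<kappa> z r"] by fastforce
  then have zt: "U zt \<le> ereal rt" "zt \<in> cball x \<rho>" "rt \<le> u + \<rho>"
    and C_min: "\<forall>w\<in>C. penalty b u \<kappa> zt rt \<le> (\<lambda>(z, r). penalty b u \<kappa> z r) w"
    by (simp_all add: C_def epi_def)
  have min: "penalty b u \<kappa> zt rt \<le> penalty b u \<kappa> z r"
    if "z \<in> cball x \<rho>" "U z \<le> ereal r" "r \<le> u + \<rho>" for z r
  proof -
    have "ereal l < ereal r"
      using low[OF that(1)] that(2) by (rule less_le_trans)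
    with that have "(z, r) \<in> C"
      by (simp add: C_def epi_def)
    with C_min show ?thesis
      by auto
  qed
  have "U zt = ereal rt"
  proof (rule ccontr)
    assume "U zt \<noteq> ereal rt"
    with zt(1) low[OF zt(2)] obtain r' where r': "U zt = ereal r'" "r' < rt"
      by (cases "U zt") auto
    with zt have "penalty b u \<kappa> zt rt \<le> penalty b u \<kappa> zt r'"
      by (intro min) auto
    with penalty_strict_mono[OF \<open>0 < \<kappa>\<close> \<open>r' < rt\<close>, of b u zt] show False
      by linarith
  qed
  with zt min low[OF zt(2)] show ?thesis
    using that by auto
qed

lemma penalty_minimizer_estimate:
  fixes y x zt :: "'z::real_inner"
  assumes reg: "\<And>z r. z \<in> cball x \<rho> \<Longrightarrow> U z \<le> ereal r \<Longrightarrow> r \<le> u + \<rho> \<Longrightarrow>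
                  inner y (z - x) \<le> \<epsilon> * norm (z - x, r - u)"
    and min: "\<And>z r. z \<in> cball x \<rho> \<Longrightarrow> U z \<le> ereal r \<Longrightarrow> r \<le> u + \<rho> \<Longrightarrow>
                penalty (x + \<tau> *\<^sub>R y) u \<kappa> zt rt \<le> penalty (x + \<tau> *\<^sub>R y) u \<kappa> z r"
    and zt: "zt \<in> cball x \<rho>" "U zt = ereal rt" "l \<le> rt" "rt \<le> u + \<rho>"
    and Ux: "U x = ereal u" and "0 \<le> \<rho>" "0 \<le> \<kappa>" "0 \<le> \<tau>" "0 \<le> \<epsilon>" "0 \<le> c"
    and "2 * \<kappa> * (u - l) \<le> c\<^sup>2"
  shows "norm (zt - x, max (rt - u) 0) \<le> 2 * \<tau> * \<epsilon> + c"
proof -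
  define D where "D = zt - x"
  define Rp where "Rp = max (rt - u) 0"
  define X where "X = norm (D, Rp)"
  have "penalty (x + \<tau> *\<^sub>R y) u \<kappa> zt rt \<le> penalty (x + \<tau> *\<^sub>R y) u \<kappa> x u"
    using min[of x u] Ux \<open>0 \<le> \<rho>\<close> by simp
  moreover have "zt - (x + \<tau> *\<^sub>R y) = D - \<tau> *\<^sub>R y"
    by (simp add: D_def)
  moreover have "(norm (D - \<tau> *\<^sub>R y))\<^sup>2 = (norm D)\<^sup>2 - 2 * \<tau> * inner D y + (norm (\<tau> *\<^sub>R y))\<^sup>2"
    using dot_norm_neg[of D "\<tau> *\<^sub>R y"] by simp
  moreover have "- (2 * \<kappa> * (rt - u)) \<le> c\<^sup>2"
  proof -
    have "2 * \<kappa> * (u - rt) \<le> 2 * \<kappa> * (u - l)"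
      using zt(3) \<open>0 \<le> \<kappa>\<close> by (intro mult_left_mono) auto
    with \<open>2 * \<kappa> * (u - l) \<le> c\<^sup>2\<close> show ?thesis
      by (simp only: right_diff_distrib minus_diff_eq)
  qed
  ultimately have "(norm D)\<^sup>2 + Rp\<^sup>2 \<le> 2 * \<tau> * inner D y + c\<^sup>2"
    by (simp add: penalty_def Rp_def)
  moreover have "inner D y \<le> \<epsilon> * X"
  proof -
    have "inner y (zt - x) \<le> \<epsilon> * norm (zt - x, u + Rp - u)"
      using zt \<open>0 \<le> \<rho>\<close> by (intro reg) (auto simp: Rp_def)
    then show ?thesis
      by (simp add: X_def D_def inner_commute)
  qed
  then have "2 * \<tau> * inner D y \<le> 2 * \<tau> * \<epsilon> * X"
    using \<open>0 \<le> \<tau>\<close> by (simp add: mult_left_mono mult.assoc)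
  moreover have "X\<^sup>2 = (norm D)\<^sup>2 + Rp\<^sup>2"
    by (simp add: X_def norm_Pair)
  ultimately have "X\<^sup>2 \<le> 2 * \<tau> * \<epsilon> * X + c\<^sup>2"
    by linarith
  then have "X \<le> 2 * \<tau> * \<epsilon> + c"
    by (rule le_add_if_square_le[rotated 2]) (use \<open>0 \<le> \<tau>\<close> \<open>0 \<le> \<epsilon>\<close> \<open>0 \<le> c\<close> in simp_all)
  then show ?thesis
    by (simp add: X_def D_def Rp_def)
qed

lemma regular_normal_epi_box:
  fixes U :: "'z::euclidean_space \<Rightarrow> ereal"
  assumes lsc: "\<And>c. open {z. ereal c < U z}" and Uz0: "U z0 = ereal u0"
    and normal: "(y, 0) \<in> regular_normal_cone (epi U) (z0, u0)" and "0 < \<epsilon>"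
  obtains \<rho> \<rho>' where "0 < \<rho>" "0 < \<rho>'" "\<And>z. z \<in> cball z0 \<rho> \<Longrightarrow> ereal (u0 - \<rho>') < U z"
    and "\<And>z r. z \<in> cball z0 \<rho> \<Longrightarrow> U z \<le> ereal r \<Longrightarrow> r \<le> u0 + \<rho> \<Longrightarrow>
           inner y (z - z0) \<le> \<epsilon> * norm (z - z0, r - u0)"
proof -
  obtain \<delta> where "0 < \<delta>" and \<delta>: "\<And>h w. U (z0 + h) \<le> ereal w \<Longrightarrow> norm (h, w - u0) < \<delta> \<Longrightarrow>
      inner y h + 0 * (w - u0) \<le> \<epsilon> * norm (h, w - u0)"
    using regular_normal_epi_bound[OF normal \<open>0 < \<epsilon>\<close>] by blast
  define \<rho>' where "\<rho>' = \<delta> / 4"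
  have "z0 \<in> {z. ereal (u0 - \<rho>') < U z}"
    using Uz0 \<open>0 < \<delta>\<close> by (simp add: \<rho>'_def)
  then obtain r0 where "0 < r0" and r0: "cball z0 r0 \<subseteq> {z. ereal (u0 - \<rho>') < U z}"
    using lsc open_contains_cball by blast
  define \<rho> where "\<rho> = min r0 \<rho>'"
  have low: "ereal (u0 - \<rho>') < U z" if "z \<in> cball z0 \<rho>" for z
    using that r0 by (auto simp: \<rho>_def)
  show ?thesis
  proof (rule that[of \<rho> \<rho>'])
    show "0 < \<rho>" "0 < \<rho>'"
      using \<open>0 < r0\<close> \<open>0 < \<delta>\<close> by (simp_all add: \<rho>_def \<rho>'_def)
    show "ereal (u0 - \<rho>') < U z" if "z \<in> cball z0 \<rho>" for z
      using that by (rule low)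
    fix z r assume z: "z \<in> cball z0 \<rho>" and r: "U z \<le> ereal r" "r \<le> u0 + \<rho>"
    have "ereal (u0 - \<rho>') < ereal r"
      using low[OF z] r(1) by (rule less_le_trans)
    with z r(2) have "norm (z - z0) \<le> \<rho>'" "\<bar>r - u0\<bar> \<le> \<rho>'"
      by (auto simp: \<rho>_def dist_norm norm_minus_commute)
    then have "norm (z - z0, r - u0) < \<delta>"
      using norm_Pair_le[of "z - z0" "r - u0"] \<open>0 < \<delta>\<close> by (simp add: \<rho>'_def)
    with \<delta>[of "z - z0" r] r(1) show "inner y (z - z0) \<le> \<epsilon> * norm (z - z0, r - u0)"
      by simp
  qed
qed

lemma subgradient_at_penalty_minimizer_near:
  fixes U :: "'z::euclidean_space \<Rightarrow> ereal"
  assumes lsc: "\<And>c. open {z. ereal c < U z}" and Uz0: "U z0 = ereal u0"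
    and "0 < \<rho>" "0 < \<beta>" "0 < \<tau>" "\<tau> * \<beta> \<le> \<rho> / 2" "8 * \<eta> * \<rho>' = \<beta>\<^sup>2" "0 < \<eta>"
    and low: "\<And>z. z \<in> cball z0 \<rho> \<Longrightarrow> ereal (u0 - \<rho>') < U z"
    and reg: "\<And>z r. z \<in> cball z0 \<rho> \<Longrightarrow> U z \<le> ereal r \<Longrightarrow> r \<le> u0 + \<rho> \<Longrightarrow>
                inner y (z - z0) \<le> \<beta> / 4 * norm (z - z0, r - u0)"
  obtains z r where "U z = ereal r" "norm (z - z0) \<le> \<tau> * \<beta>" "max (r - u0) 0 \<le> \<tau> * \<beta>"
    and "(1 / (\<tau>\<^sup>2 * \<eta> + max (r - u0) 0)) *\<^sub>R (z0 + \<tau> *\<^sub>R y - z) \<in> subdiff U z"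
proof -
  define \<kappa> where "\<kappa> = \<tau>\<^sup>2 * \<eta>"
  have "0 < \<kappa>"
    using \<open>0 < \<tau>\<close> \<open>0 < \<eta>\<close> by (simp add: \<kappa>_def)
  obtain zt rt where zt: "U zt = ereal rt" "zt \<in> cball z0 \<rho>" "u0 - \<rho>' < rt" "rt \<le> u0 + \<rho>"
    and min: "\<And>z r. z \<in> cball z0 \<rho> \<Longrightarrow> U z \<le> ereal r \<Longrightarrow> r \<le> u0 + \<rho> \<Longrightarrow>
                penalty (z0 + \<tau> *\<^sub>R y) u0 \<kappa> zt rt \<le> penalty (z0 + \<tau> *\<^sub>R y) u0 \<kappa> z r"
    using penalty_minimizer_exists[where \<rho>=\<rho> and l="u0 - \<rho>'" and b="z0 + \<tau> *\<^sub>R y",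
        OF lsc Uz0 low _ \<open>0 < \<kappa>\<close>] \<open>0 < \<rho>\<close> by auto
  have "2 * \<kappa> * (u0 - (u0 - \<rho>')) = (\<tau> * \<beta> / 2)\<^sup>2"
    using \<open>8 * \<eta> * \<rho>' = \<beta>\<^sup>2\<close> by (simp add: \<kappa>_def power2_eq_square algebra_simps)
  then have "norm (zt - z0, max (rt - u0) 0) \<le> 2 * \<tau> * (\<beta> / 4) + \<tau> * \<beta> / 2"
    by (intro penalty_minimizer_estimate[where U=U and x=z0 and u=u0 and y=y and \<rho>=\<rho>
          and \<epsilon>="\<beta> / 4" and l="u0 - \<rho>'", OF reg min zt(2,1)])
      (use \<open>0 < \<tau>\<close> \<open>0 < \<beta>\<close> \<open>0 < \<kappa>\<close> \<open>0 < \<rho>\<close> zt Uz0 in auto)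
  then have "norm (zt - z0, max (rt - u0) 0) \<le> \<tau> * \<beta>"
    by (simp add: field_simps)
  then have near: "norm (zt - z0) \<le> \<tau> * \<beta>" "max (rt - u0) 0 \<le> \<tau> * \<beta>"
    using norm_fst_le norm_snd_le[of "max (rt - u0) 0", unfolded real_norm_def]
    by (metis order.trans, metis abs_ge_self order.trans)
  moreover have "(1 / (\<kappa> + max (rt - u0) 0)) *\<^sub>R (z0 + \<tau> *\<^sub>R y - zt) \<in> subdiff U zt"
    using near \<open>\<tau> * \<beta> \<le> \<rho> / 2\<close>
    by (intro subdiff_at_penalty_minimizer[OF lsc zt(1) \<open>0 < \<kappa>\<close> \<open>0 < \<rho>\<close> _ _ min]) auto
  ultimately show ?thesis
    using that zt(1) by (simp add: \<kappa>_def)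
qed

lemma subgradients_approximating_horizontal_normal:
  fixes U :: "'z::euclidean_space \<Rightarrow> ereal"
  assumes lsc: "\<And>c. open {z. ereal c < U z}" and Uz0: "U z0 = ereal u0"
    and normal: "(y, 0) \<in> regular_normal_cone (epi U) (z0, u0)" and "0 < \<epsilon>"
  shows "\<exists>z p \<mu>. U z \<noteq> \<infinity> \<and> dist z z0 < \<epsilon> \<and> 0 < \<mu> \<and> \<mu> < \<epsilon> \<and> dist (\<mu> *\<^sub>R p) y < \<epsilon>
           \<and> p \<in> subdiff U z"
proof -
  define \<beta> where "\<beta> = \<epsilon> / 2"
  obtain \<rho> \<rho>' where "0 < \<rho>" "0 < \<rho>'" and low: "\<And>z. z \<in> cball z0 \<rho> \<Longrightarrow> ereal (u0 - \<rho>') < U z"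
    and reg: "\<And>z r. z \<in> cball z0 \<rho> \<Longrightarrow> U z \<le> ereal r \<Longrightarrow> r \<le> u0 + \<rho> \<Longrightarrow>
                inner y (z - z0) \<le> \<beta> / 4 * norm (z - z0, r - u0)"
    using regular_normal_epi_box[OF lsc Uz0 normal, of "\<beta> / 4"] \<open>0 < \<epsilon>\<close> by (auto simp: \<beta>_def)
  \<comment> \<open>With \<open>\<kappa> = \<tau>\<^sup>2 * \<eta>\<close> this choice makes \<open>2 * \<kappa> * \<rho>' = (\<tau> * \<beta> / 2)\<^sup>2\<close>, so the
    penalty minimizer lies within \<open>\<tau> * \<beta>\<close> of \<open>(z0, u0)\<close>.\<close>
  define \<eta> where "\<eta> = \<beta>\<^sup>2 / (8 * \<rho>')"
  define \<tau> where "\<tau> = min 1 (min (\<rho> / (2 * \<beta>)) (\<epsilon> / (4 * \<eta>)))"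
  have "0 < \<beta>" "\<beta> < \<epsilon>" "2 * \<beta> = \<epsilon>" "0 < \<eta>" "8 * \<eta> * \<rho>' = \<beta>\<^sup>2"
    using \<open>0 < \<epsilon>\<close> \<open>0 < \<rho>'\<close> by (simp_all add: \<beta>_def \<eta>_def)
  then have "0 < \<tau>" "\<tau> \<le> 1" "\<tau> \<le> \<rho> / (2 * \<beta>)" "\<tau> \<le> \<epsilon> / (4 * \<eta>)"
    using \<open>0 < \<rho>\<close> \<open>0 < \<epsilon>\<close> by (simp_all add: \<tau>_def)
  then have "\<tau> * \<beta> \<le> \<rho> / 2" "\<tau> * \<eta> \<le> \<epsilon> / 4" "\<tau> * \<beta> \<le> \<beta>"
    using \<open>0 < \<beta>\<close> \<open>0 < \<eta>\<close> by (simp_all add: field_simps)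
  then obtain z r where z: "U z = ereal r" "norm (z - z0) \<le> \<tau> * \<beta>" "max (r - u0) 0 \<le> \<tau> * \<beta>"
    and p: "(1 / (\<tau>\<^sup>2 * \<eta> + max (r - u0) 0)) *\<^sub>R (z0 + \<tau> *\<^sub>R y - z) \<in> subdiff U z"
    using subgradient_at_penalty_minimizer_near[OF lsc Uz0 \<open>0 < \<rho>\<close> \<open>0 < \<beta>\<close> \<open>0 < \<tau>\<close> _
        \<open>8 * \<eta> * \<rho>' = \<beta>\<^sup>2\<close> \<open>0 < \<eta>\<close> low reg] by blast
  define a where "a = \<tau>\<^sup>2 * \<eta> + max (r - u0) 0"
  define p where "p = (1 / a) *\<^sub>R (z0 + \<tau> *\<^sub>R y - z)"
  have "0 < a"
    using \<open>0 < \<tau>\<close> \<open>0 < \<eta>\<close> by (simp add: a_def add_pos_nonneg)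
  show ?thesis
  proof (intro exI conjI)
    show "U z \<noteq> \<infinity>" "p \<in> subdiff U z" "0 < a / \<tau>"
      using z(1) p \<open>0 < a\<close> \<open>0 < \<tau>\<close> by (simp_all add: p_def a_def)
    show "dist z z0 < \<epsilon>"
      using z(2) \<open>\<tau> * \<beta> \<le> \<beta>\<close> \<open>\<beta> < \<epsilon>\<close> by (simp add: dist_norm)
    have "max (r - u0) 0 / \<tau> \<le> \<beta>"
      using z(3) \<open>0 < \<tau>\<close> by (simp add: divide_le_eq mult.commute)
    moreover have "a / \<tau> = \<tau> * \<eta> + max (r - u0) 0 / \<tau>"
      using \<open>0 < \<tau>\<close> by (simp add: a_def add_divide_distrib power2_eq_square)
    ultimately show "a / \<tau> < \<epsilon>"
      using \<open>\<tau> * \<eta> \<le> \<epsilon> / 4\<close> \<open>2 * \<beta> = \<epsilon>\<close> \<open>0 < \<epsilon>\<close> by linarith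
    have "(a / \<tau>) *\<^sub>R p - y = - ((1 / \<tau>) *\<^sub>R (z - z0))"
      using \<open>0 < a\<close> \<open>0 < \<tau>\<close> by (simp add: p_def algebra_simps)
    then have "dist ((a / \<tau>) *\<^sub>R p) y = norm (z - z0) / \<tau>"
      using \<open>0 < \<tau>\<close> by (simp add: dist_norm)
    moreover have "norm (z - z0) / \<tau> \<le> \<beta>"
      using z(2) \<open>0 < \<tau>\<close> by (simp add: divide_le_eq mult.commute)
    ultimately show "dist ((a / \<tau>) *\<^sub>R p) y < \<epsilon>"
      using \<open>\<beta> < \<epsilon>\<close> by linarith
  qed
qed

lemma subgradient_sequence_approximating_horizontal_normal:
  fixes U :: "'z::euclidean_space \<Rightarrow> ereal"
  assumes lsc: "\<And>c. open {z. ereal c < U z}" and Uz0: "U z0 = ereal u0"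
    and normal: "(y, 0) \<in> regular_normal_cone (epi U) (z0, u0)"
  obtains z p \<mu> where "\<And>n. U (z n) \<noteq> \<infinity>" "\<And>n. p n \<in> subdiff U (z n)" "\<And>n. 0 < \<mu> n"
    and "z \<longlonglongrightarrow> z0" "\<mu> \<longlonglongrightarrow> 0" "(\<lambda>n. \<mu> n *\<^sub>R p n) \<longlonglongrightarrow> y"
proof -
  have "\<forall>n. \<exists>z p \<mu>. U z \<noteq> \<infinity> \<and> dist z z0 < 1 / Suc n \<and> 0 < \<mu> \<and> \<mu> < 1 / Suc n
           \<and> dist (\<mu> *\<^sub>R p) y < 1 / Suc n \<and> p \<in> subdiff U z"
    using subgradients_approximating_horizontal_normal[OF lsc Uz0 normal] by simp
  then obtain z p \<mu> where approx: "\<And>n. U (z n) \<noteq> \<infinity> \<and> dist (z n) z0 < 1 / Suc n \<and> 0 < \<mu> n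
      \<and> \<mu> n < 1 / Suc n \<and> dist (\<mu> n *\<^sub>R p n) y < 1 / Suc n \<and> p n \<in> subdiff U (z n)"
    by metis
  have "norm (z n - z0) < 1 / Suc n" "norm (\<mu> n) < 1 / Suc n" "norm (\<mu> n *\<^sub>R p n - y) < 1 / Suc n"
    for n
    using approx[of n] by (simp_all add: dist_norm)
  then have "(\<lambda>n. z n - z0) \<longlonglongrightarrow> 0" "\<mu> \<longlonglongrightarrow> 0" "(\<lambda>n. \<mu> n *\<^sub>R p n - y) \<longlonglongrightarrow> 0"
    by (simp_all add: LIMSEQ_norm_0)
  with approx show ?thesis
    by (intro that) (simp_all add: LIM_zero_iff)
qed

lemma hamiltonian_horizontal_limit:
  fixes H :: "real \<Rightarrow> 'a::real_normed_vector \<Rightarrow> 'a \<Rightarrow> real"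
  assumes H1: "continuous_on ({0..T} \<times> UNIV \<times> UNIV) (\<lambda>(t, x, p). H t x p)"
    and H2: "\<And>t x. t \<in> {0..T} \<Longrightarrow> convex_on UNIV (H t x)"
    and "t \<in> {0..T}" and "0 < S"
    and ts: "\<forall>\<^sub>F n in sequentially. ts n \<in> {0..T}" "ts \<longlonglongrightarrow> t" and "xs \<longlonglongrightarrow> x"
    and \<mu>: "\<And>n. 0 < \<mu> n" "\<mu> \<longlonglongrightarrow> 0"
    and pt: "(\<lambda>n. \<mu> n * pt n) \<longlonglongrightarrow> nt" and px: "(\<lambda>n. \<mu> n *\<^sub>R px n) \<longlonglongrightarrow> nx"
    and HJ: "\<forall>\<^sub>F n in sequentially. - pt n + H (ts n) (xs n) (- px n) \<le> 0"
  shows "H t x (- (S *\<^sub>R nx)) - H t x 0 \<le> S * nt"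
proof -
  have lim_H: "((\<lambda>n. H (ts n) (xs n) (q n)) \<longlongrightarrow> H t x q0) sequentially" if "q \<longlonglongrightarrow> q0" for q q0
  proof -
    have "((\<lambda>n. (ts n, xs n, q n)) \<longlongrightarrow> (t, x, q0)) sequentially"
      by (intro tendsto_Pair ts(2) \<open>xs \<longlonglongrightarrow> x\<close> that)
    moreover have "\<forall>\<^sub>F n in sequentially. (ts n, xs n, q n) \<in> {0..T} \<times> UNIV \<times> UNIV"
      using ts(1) by simp
    ultimately show ?thesis
      using continuous_on_tendsto_compose[OF H1] \<open>t \<in> {0..T}\<close> by (fastforce simp: o_def)
  qed
  have "\<forall>\<^sub>F n in sequentially. S * \<mu> n \<le> 1"
    using \<mu>(2) \<open>0 < S\<close> by (auto dest!: order_tendstoD(2)[of _ _ _ "1 / S"] elim!: eventually_mono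
        simp: field_simps mult.commute)
  with ts(1) HJ have "\<forall>\<^sub>F n in sequentially.
      H (ts n) (xs n) (- (S *\<^sub>R (\<mu> n *\<^sub>R px n))) \<le> (1 - S * \<mu> n) * H (ts n) (xs n) 0 + S * (\<mu> n * pt n)"
  proof eventually_elim
    case (elim n)
    have "H (ts n) (xs n) ((1 - S * \<mu> n) *\<^sub>R 0 + (S * \<mu> n) *\<^sub>R (- px n))
        \<le> (1 - S * \<mu> n) * H (ts n) (xs n) 0 + (S * \<mu> n) * H (ts n) (xs n) (- px n)"
      using \<open>0 < S\<close> \<mu>(1)[of n] elim by (intro convex_onD[OF H2]) auto
    moreover have "(S * \<mu> n) * H (ts n) (xs n) (- px n) \<le> (S * \<mu> n) * pt n"
      using \<open>0 < S\<close> \<mu>(1)[of n] elim(2) by (intro mult_left_mono) auto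
    ultimately show ?case
      by (simp add: algebra_simps)
  qed
  moreover have "((\<lambda>n. H (ts n) (xs n) (- (S *\<^sub>R (\<mu> n *\<^sub>R px n)))) \<longlongrightarrow> H t x (- (S *\<^sub>R nx))) sequentially"
    using px by (intro lim_H tendsto_intros)
  moreover have "((\<lambda>n. (1 - S * \<mu> n) * H (ts n) (xs n) 0 + S * (\<mu> n * pt n)) \<longlongrightarrow>
      (1 - S * 0) * H t x 0 + S * nt) sequentially"
    using \<mu>(2) pt by (intro tendsto_intros lim_H) auto
  ultimately have "H t x (- (S *\<^sub>R nx)) \<le> (1 - S * 0) * H t x 0 + S * nt"
    by (intro tendsto_le[OF trivial_limit_sequentially]) auto
  then show ?thesis
    by simp
qed

lemma conj_H_lower_bound:
  assumes "conj_H H t x v = ereal l"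
  shows "inner v p - H t x p \<le> l"
proof -
  have "ereal (inner v p - H t x p) \<le> conj_H H t x v"
    unfolding conj_H_def by (rule SUP_upper) simp
  with assms show ?thesis
    by simp
qed

lemma nonneg_if_scaled_bounded_below:
  fixes a C :: real
  assumes "\<And>S. 0 < S \<Longrightarrow> - C \<le> S * a"
  shows "0 \<le> a"
proof (rule ccontr)
  assume "\<not> 0 \<le> a"
  then have "- C \<le> (\<bar>C\<bar> + 1) / (- a) * a"
    by (intro assms divide_pos_pos) auto
  with \<open>\<not> 0 \<le> a\<close> show False
    by simp
qed

lemma nonhorizontal_normal_inequality:
  fixes U :: "real \<times> 'a::euclidean_space \<Rightarrow> ereal"
  assumes lsc: "\<And>c. open {z. ereal c < U z}" and Uz: "U (t, x) = ereal u"
    and normal: "((nt, nx), - m) \<in> regular_normal_cone (epi U) ((t, x), u)" and "0 < m"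
    and HJ: "\<And>pt px. (pt, px) \<in> subdiff U (t, x) \<Longrightarrow> - pt + H t x (- px) \<le> 0"
    and L: "conj_H H t x v = ereal l"
  shows "0 \<le> nt + inner v nx + m * l"
proof -
  have "m *\<^sub>R (nt / m, nx /\<^sub>R m) = (nt, nx)"
    using \<open>0 < m\<close> by simp
  with normal have "(nt / m, nx /\<^sub>R m) \<in> subdiff U (t, x)"
    by (intro subdiff_if_regular_normal_epi[OF lsc Uz _ \<open>0 < m\<close>]) simp
  then have "H t x (- (nx /\<^sub>R m)) \<le> nt / m"
    using HJ by fastforce
  moreover have "- (inverse m * inner v nx) - H t x (- (nx /\<^sub>R m)) \<le> l"
    using conj_H_lower_bound[OF L, of "- (nx /\<^sub>R m)"] by simp
  ultimately have "0 \<le> m * (nt / m + inverse m * inner v nx + l)"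
    using \<open>0 < m\<close> by simp
  with \<open>0 < m\<close> show ?thesis
    by (simp add: distrib_left mult.assoc[symmetric])
qed

lemma horizontal_normal_inequality:
  fixes U :: "real \<times> 'a::euclidean_space \<Rightarrow> ereal"
  assumes lsc: "\<And>c. open {z. ereal c < U z}" and Uz: "U (t, x) = ereal u"
    and normal: "((nt, nx), 0) \<in> regular_normal_cone (epi U) ((t, x), u)"
    and "t \<in> {0<..T}"
    and H1: "continuous_on ({0..T} \<times> UNIV \<times> UNIV) (\<lambda>(t, x, p). H t x p)"
    and H2: "\<And>t x. t \<in> {0..T} \<Longrightarrow> convex_on UNIV (H t x)"
    and dom: "\<And>t x. U (t, x) \<noteq> \<infinity> \<Longrightarrow> t \<in> {0..T}"
    and HJ: "\<And>t x pt px. U (t, x) \<noteq> \<infinity> \<Longrightarrow> t \<in> {0<..T} \<Longrightarrow>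
               (pt, px) \<in> subdiff U (t, x) \<Longrightarrow> - pt + H t x (- px) \<le> 0"
    and L: "conj_H H t x v = ereal l"
  shows "0 \<le> nt + inner v nx"
proof -
  obtain z p \<mu> where z: "\<And>n. U (z n) \<noteq> \<infinity>" and p: "\<And>n. p n \<in> subdiff U (z n)"
    and \<mu>_pos: "\<And>n. 0 < \<mu> n" and z_lim: "z \<longlonglongrightarrow> (t, x)" and \<mu>_lim: "\<mu> \<longlonglongrightarrow> 0"
    and p_lim: "(\<lambda>n. \<mu> n *\<^sub>R p n) \<longlonglongrightarrow> (nt, nx)"
    using subgradient_sequence_approximating_horizontal_normal[OF lsc Uz normal] by blast
  have "\<forall>\<^sub>F n in sequentially. 0 < fst (z n)"
    using \<open>t \<in> {0<..T}\<close> tendsto_fst[OF z_lim] by (auto intro: order_tendstoD)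
  then have HJ_n: "\<forall>\<^sub>F n in sequentially. - fst (p n) + H (fst (z n)) (snd (z n)) (- snd (p n)) \<le> 0"
  proof eventually_elim
    case (elim n)
    then have "fst (z n) \<in> {0<..T}"
      using dom[of "fst (z n)" "snd (z n)"] z[of n] by auto
    then show ?case
      using HJ[of "fst (z n)" "snd (z n)" "fst (p n)" "snd (p n)"] z[of n] p[of n] by simp
  qed
  have "\<forall>\<^sub>F n in sequentially. fst (z n) \<in> {0..T}"
    using z dom by (intro always_eventually) (metis prod.collapse)
  then have limit: "H t x (- (S *\<^sub>R nx)) - H t x 0 \<le> S * nt" if "0 < S" for S
    using \<open>t \<in> {0<..T}\<close> tendsto_fst[OF z_lim] tendsto_snd[OF z_lim]
      tendsto_fst[OF p_lim] tendsto_snd[OF p_lim]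
    by (intro hamiltonian_horizontal_limit[OF H1 H2 _ that _ _ _ \<mu>_pos \<mu>_lim _ _ HJ_n]) auto
  have "- (l + H t x 0) \<le> S * (nt + inner v nx)" if "0 < S" for S
    using limit[OF that] conj_H_lower_bound[OF L, of "- (S *\<^sub>R nx)"] by (simp add: algebra_simps)
  then show ?thesis
    by (rule nonneg_if_scaled_bounded_below)
qed

lemma regular_normal_inequality:
  fixes U :: "real \<times> 'a::euclidean_space \<Rightarrow> ereal"
  assumes lsc: "\<And>c. open {z. ereal c < U z}" and Uz: "U (t, x) = ereal u"
    and normal: "((nt, nx), \<nu>) \<in> regular_normal_cone (epi U) ((t, x), u)" and "\<nu> \<le> 0"
    and "t \<in> {0<..T}"
    and H1: "continuous_on ({0..T} \<times> UNIV \<times> UNIV) (\<lambda>(t, x, p). H t x p)"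
    and H2: "\<And>t x. t \<in> {0..T} \<Longrightarrow> convex_on UNIV (H t x)"
    and dom: "\<And>t x. U (t, x) \<noteq> \<infinity> \<Longrightarrow> t \<in> {0..T}"
    and HJ: "\<And>t x pt px. U (t, x) \<noteq> \<infinity> \<Longrightarrow> t \<in> {0<..T} \<Longrightarrow>
               (pt, px) \<in> subdiff U (t, x) \<Longrightarrow> - pt + H t x (- px) \<le> 0"
    and L: "conj_H H t x v = ereal l"
  shows "0 \<le> nt + inner v nx - \<nu> * l"
proof (cases "\<nu> = 0")
  case True
  with normal have "0 \<le> nt + inner v nx"
    by (intro horizontal_normal_inequality[OF lsc Uz _ \<open>t \<in> {0<..T}\<close> H1 H2 dom HJ L]) simp
  with True show ?thesis
    by simp
next
  case False
  with \<open>\<nu> \<le> 0\<close> have "0 < - \<nu>"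
    by simp
  moreover have "- pt + H t x (- px) \<le> 0" if "(pt, px) \<in> subdiff U (t, x)" for pt px
    using HJ[OF _ \<open>t \<in> {0<..T}\<close> that] Uz by simp
  ultimately show ?thesis
    using nonhorizontal_normal_inequality[OF lsc Uz _ _ _ L, of nt nx "- \<nu>"] normal by simp
qed

theorem proposition5p7:
  fixes T :: real
    and U :: "real \<times> 'a::euclidean_space \<Rightarrow> ereal"
    and H :: "real \<Rightarrow> 'a \<Rightarrow> 'a \<Rightarrow> real"
  assumes U_outside: "\<And>t x. t \<notin> {0..T} \<Longrightarrow> U (t, x) = \<infinity>"
    and U_proper: "proper_fun U"
    and U_lsc: "lsc_on ({0..T} \<times> UNIV) U"
    and H1: "continuous_on ({0..T} \<times> UNIV \<times> UNIV) (\<lambda>(t, x, p). H t x p)"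
    and H2: "\<And>t x. t \<in> {0..T} \<Longrightarrow> convex_on UNIV (H t x)"
    and HJ: "\<And>t x pt px. (t, x) \<in> edom U \<Longrightarrow> t \<in> {0<..T} \<Longrightarrow>
               (pt, px) \<in> subdiff U (t, x) \<Longrightarrow> - pt + H t x (- px) \<le> 0"
  shows "\<forall>t x nt nx nu v. (t, x) \<in> edom U \<and> t \<in> {0<..T}
           \<and> ((nt, nx), nu) \<in> normal_cone (epi U) ((t, x), real_of_ereal (U (t, x)))
           \<and> v \<in> edom (conj_H H t x)
           \<longrightarrow> nt + inner v nx - nu * real_of_ereal (conj_H H t x v) \<ge> 0"
proof (intro allI impI, elim conjE)
  fix t x nt nx nu v
  assume "(t, x) \<in> edom U" "t \<in> {0<..T}" "v \<in> edom (conj_H H t x)"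
    and normal: "((nt, nx), nu) \<in> normal_cone (epi U) ((t, x), real_of_ereal (U (t, x)))"
  then obtain u l where Uz: "U (t, x) = ereal u" and L: "conj_H H t x v = ereal l"
    unfolding edom_def by (cases "U (t, x)"; cases "conj_H H t x v") auto
  have "U z = \<infinity>" if "z \<notin> {0..T} \<times> UNIV" for z
    using that U_outside[of "fst z" "snd z"] by (cases z) auto
  then have lsc: "\<And>c. open {z. ereal c < U z}"
    using open_superlevel_if_lsc_on[OF closed_Times[OF closed_atLeastAtMost closed_UNIV] _ U_lsc] by blast
  have HJ': "- pt + H t x (- px) \<le> 0"
    if "U (t, x) \<noteq> \<infinity>" "t \<in> {0<..T}" "(pt, px) \<in> subdiff U (t, x)" for t x pt px
    using that U_proper by (intro HJ) (auto simp: edom_def proper_fun_def)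
  have nu: "nu \<le> 0"
    using normal Uz by (intro normal_cone_epi_snd_nonpos) auto
  have reg: "((nt, nx), nu) \<in> regular_normal_cone (epi U) ((t, x), u)"
    using normal Uz normal_cone_subset_regular_normal_cone by fastforce
  have dom: "\<And>t x. U (t, x) \<noteq> \<infinity> \<Longrightarrow> t \<in> {0..T}"
    using U_outside by blast
  have "0 \<le> nt + inner v nx - nu * l"
    by (rule regular_normal_inequality[OF lsc Uz reg nu \<open>t \<in> {0<..T}\<close> H1 H2 dom HJ' L])
  with L show "nt + inner v nx - nu * real_of_ereal (conj_H H t x v) \<ge> 0"
    by simp
qed

end
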